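(* Let $\lambda_{\min}<\lambda_{\max}$ and let $h\colon\mathbb{R}\to\mathbb{R}$ be continuous and $(\lambda_{\max}-\lambda_{\min})$-periodic, having only one maximum point on $[\lambda_{\min},\lambda_{\max})$ (i.e. on one period). Let $\mathcal{F}$ be the generalized von Mises family generated by $h$, consisting of the functions on $[\lambda_{\min},\lambda_{\max}]$ \[ f_{a,b,s}(\lambda)=\exp\bigl(b+a\,h(\lambda-s)\bigr),\qquad a\ge 0,\ b\in\mathbb{R},\ s\in\mathbb{R}. \] Assume $\mathcal{F}$ is closed under pointwise multiplication. Then $\mathcal{F}$ is the von Mises family, i.e. one can take $h(\lambda)=\cos\frac{2\pi\lambda}{\lambda_{\max}-\lambda_{\min}}$ (the family $\mathcal{F}$ coincides with $\{\exp(b+a\cos\frac{2\pi(\lambda-s)}{\lambda_{\max}-\lambda_{\min}}):a\ge0,\,b,s\in\mathbb{R}\}$). *)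

theory Defs
  imports Complex_Main
begin

definition gvM_family :: "(real \<Rightarrow> real) \<Rightarrow> real \<Rightarrow> real \<Rightarrow> (real \<Rightarrow> real) set" where
  "gvM_family h lmin lmax =
     {(\<lambda>x. if x \<in> {lmin..lmax} then exp (b + a * h (x - s)) else 0) | a b s. a \<ge> 0}"

definition mult_closed :: "(real \<Rightarrow> real) set \<Rightarrow> bool" where
  "mult_closed F \<longleftrightarrow> (\<forall>f\<in>F. \<forall>g\<in>F. (\<lambda>x. f x * g x) \<in> F)"

end

theory Submission
  imports Defs "HOL-Analysis.Analysis"
begin

(*
  Write T = lmax - lmin.  Closure under multiplication says that for every shift s the function
  h(x) + h(x - s) is again of the form b + a h(x - t).  Taking the k-th Fourier coefficient c_k of
  h on both sides gives |1 + e^(2 pi i k s / T)| = |a| for every k <> 0 with c_k <> 0.  If two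
  frequencies 0 < j < k both occurred, the shift s = T/k would give |a| = 2 and hence
  e^(2 pi i j / k) = 1, which is absurd.  So h has a single frequency k0, and by uniqueness of
  Fourier coefficients (proved via the Stone-Weierstrass theorem on the circle)
  h(x) = alpha + beta cos(2 pi k0 x / T + phi).  A unique maximum point per period rules out
  beta = 0 and k0 > 1, either of which would give h a period shorter than T, and an affine
  change of h does not change the family.
*)

section \<open>Periodic functions\<close>

lemma periodic_add_of_int:
  fixes f :: "real \<Rightarrow> 'a"
  assumes "\<forall>x. f (x + T) = f x"
  shows "f (x + of_int n * T) = f x"
proof (induction n arbitrary: x rule: int_induct[where k = 0])
  case base
  then show ?case by simp
next
  case (step1 i)
  have "f (x + of_int (i + 1) * T) = f ((x + of_int i * T) + T)"
    by (simp add: algebra_simps)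
  then show ?case using assms step1.IH by simp
next
  case (step2 i)
  have "f (x + of_int (i - 1) * T) = f ((x - T) + of_int i * T)"
    by (simp add: algebra_simps)
  also have "\<dots> = f ((x - T) + T)" using step2.IH assms by metis
  finally show ?case by simp
qed

lemma period_representative:
  fixes T :: real
  assumes "T > 0"
  obtains y n where "y \<in> {a..<a+T}" "x = y + of_int n * T"
proof
  let ?n = "\<lfloor>(x - a) / T\<rfloor>"
  show "x = (x - of_int ?n * T) + of_int ?n * T" by simp
  have "of_int ?n * T \<le> x - a" "x - a < (of_int ?n + 1) * T"
    using floor_divide_lower floor_divide_upper assms by blast+
  then show "x - of_int ?n * T \<in> {a..<a+T}"
    by (simp add: algebra_simps)
qed

lemma periodic_eqI:
  fixes T :: real
  assumes "T > 0" "\<forall>x. f (x + T) = f x" "\<forall>x. g (x + T) = g x"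
    and "\<And>y. y \<in> {a..<a+T} \<Longrightarrow> f y = g y"
  shows "f x = g x"
proof -
  obtain y n where "y \<in> {a..<a+T}" "x = y + of_int n * T"
    using period_representative[OF assms(1)] .
  then show ?thesis using assms(4) periodic_add_of_int[OF assms(2)] periodic_add_of_int[OF assms(3)]
    by metis
qed

lemma integral_periodic_shift:
  fixes f :: "real \<Rightarrow> 'a::banach"
  assumes T: "T > 0" and f: "continuous_on UNIV f" "\<forall>x. f (x + T) = f x"
  shows "integral {0..T} (\<lambda>x. f (x - s)) = integral {0..T} f"
proof -
  obtain r n where r: "r \<in> {0..<0+T}" "-s = r + of_int n * T"
    using period_representative[OF T] .
  have int: "f integrable_on {u..v}" for u v
    by (rule integrable_continuous_interval) (rule continuous_on_subset[OF f(1)], auto)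
  have "x - s = (x + r) + of_int n * T" for x
    using r(2) by simp
  then have "integral {0..T} (\<lambda>x. f (x - s)) = integral {0..T} (\<lambda>x. f ((x + r) + of_int n * T))"
    by presburger
  also have "\<dots> = integral {0..T} (\<lambda>x. f (x + r))" using periodic_add_of_int[OF f(2)] by simp
  also have "\<dots> = integral {r..r+T} f"
    using integral_shift_Icc_real[of 0 T f r] by (simp add: o_def add.commute)
  also have "\<dots> = integral {r..T} f + integral {T..r+T} f"
    using Henstock_Kurzweil_Integration.integral_combine[where a = r and c = T and b = "r + T" and f = f] r int
    by simp
  also have "integral {T..r+T} f = integral {0..r} (\<lambda>x. f (x + T))"
    using integral_shift_Icc_real[of 0 r f T] by (simp add: o_def add.commute)
  also have "\<dots> = integral {0..r} f" using f(2) by simp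
  also have "integral {r..T} f + integral {0..r} f = integral {0..T} f"
    using Henstock_Kurzweil_Integration.integral_combine[where a = 0 and c = r and b = T and f = f] r int
    by (simp add: add.commute)
  finally show ?thesis .
qed

section \<open>Fourier coefficients\<close>

definition fourier_mode :: "real \<Rightarrow> int \<Rightarrow> real \<Rightarrow> complex" where
  "fourier_mode T k x = cis (2 * pi * of_int k / T * x)"

definition fourier_coeff :: "real \<Rightarrow> (real \<Rightarrow> complex) \<Rightarrow> int \<Rightarrow> complex" where
  "fourier_coeff T f k = integral {0..T} (\<lambda>x. f x * cnj (fourier_mode T k x))"

lemma fourier_mode_0 [simp]: "fourier_mode T 0 x = 1"
  by (simp add: fourier_mode_def)

lemma fourier_mode_at_0 [simp]: "fourier_mode T k 0 = 1"
  by (simp add: fourier_mode_def)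

lemma fourier_mode_mult: "fourier_mode T j x * fourier_mode T k x = fourier_mode T (j + k) x"
  by (simp add: fourier_mode_def cis_mult add_divide_distrib ring_distribs)

lemma cnj_fourier_mode_mult [simp]: "cnj (fourier_mode T k x) * fourier_mode T k x = 1"
  by (simp add: fourier_mode_def cis_cnj cis_mult)

lemma fourier_mode_mult_cnj [simp]: "fourier_mode T k x * cnj (fourier_mode T k x) = 1"
  by (simp add: fourier_mode_def cis_cnj cis_mult)

lemma cnj_fourier_mode: "cnj (fourier_mode T k x) = fourier_mode T (-k) x"
  by (simp add: fourier_mode_def cis_cnj)

lemma norm_fourier_mode [simp]: "cmod (fourier_mode T k x) = 1"
  by (simp add: fourier_mode_def)

lemma fourier_mode_diff: "fourier_mode T k (x - s) = fourier_mode T k x * cnj (fourier_mode T k s)"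
  by (simp add: fourier_mode_def cis_cnj cis_mult right_diff_distrib)

lemma fourier_mode_periodic:
  assumes "T \<noteq> 0"
  shows "fourier_mode T k (x + T) = fourier_mode T k x"
proof -
  have "2 * pi * of_int k / T * (x + T) = 2 * pi * of_int k / T * x + 2 * pi * of_int k"
    using assms by (simp add: field_simps)
  then show ?thesis by (simp add: fourier_mode_def cis_mult[symmetric])
qed

lemma continuous_on_fourier_mode [continuous_intros]:
  "continuous_on A f \<Longrightarrow> continuous_on A (\<lambda>x. fourier_mode T k (f x))"
  unfolding fourier_mode_def by (intro continuous_intros)

lemma fourier_coeff_add:
  assumes "continuous_on UNIV f" "continuous_on UNIV g"
  shows "fourier_coeff T (\<lambda>x. f x + g x) k = fourier_coeff T f k + fourier_coeff T g k"
proof -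
  have "(\<lambda>x. u x * cnj (fourier_mode T k x)) integrable_on {0..T}"
    if "continuous_on UNIV u" for u :: "real \<Rightarrow> complex"
    by (intro integrable_continuous_interval continuous_intros continuous_on_subset[OF that]) auto
  then show ?thesis
    unfolding fourier_coeff_def distrib_right using assms by (simp add: integral_add)
qed

lemma fourier_coeff_cmult: "fourier_coeff T (\<lambda>x. c * f x) k = c * fourier_coeff T f k"
  by (simp add: fourier_coeff_def mult.assoc)

lemma fourier_coeff_diff:
  assumes "continuous_on UNIV f" "continuous_on UNIV g"
  shows "fourier_coeff T (\<lambda>x. f x - g x) k = fourier_coeff T f k - fourier_coeff T g k"
  using fourier_coeff_add[of f "\<lambda>x. -1 * g x"] fourier_coeff_cmult[of T "-1" g] assms
  by (simp add: continuous_on_minus)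

lemma fourier_coeff_sum:
  assumes "finite J" "\<And>j. j \<in> J \<Longrightarrow> continuous_on UNIV (f j)"
  shows "fourier_coeff T (\<lambda>x. \<Sum>j\<in>J. f j x) k = (\<Sum>j\<in>J. fourier_coeff T (f j) k)"
  using assms
proof (induction J rule: finite_induct)
  case empty
  then show ?case by (simp add: fourier_coeff_def)
next
  case (insert j J)
  then show ?case
    by (simp add: fourier_coeff_add continuous_on_sum)
qed

lemma fourier_coeff_shift:
  assumes "T > 0" "continuous_on UNIV f" "\<forall>x. f (x + T) = f x"
  shows "fourier_coeff T (\<lambda>x. f (x - s)) k = cnj (fourier_mode T k s) * fourier_coeff T f k"
proof -
  define g where "g = (\<lambda>x. f x * cnj (fourier_mode T k x))"
  have g: "continuous_on UNIV g" "\<forall>x. g (x + T) = g x"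
    using assms
    by (auto simp: g_def fourier_mode_periodic
        intro!: continuous_on_mult continuous_on_cnj continuous_on_fourier_mode continuous_on_id)
  have "f (x - s) * cnj (fourier_mode T k x) = cnj (fourier_mode T k s) * g (x - s)" for x
    by (simp add: g_def fourier_mode_diff)
  then have "fourier_coeff T (\<lambda>x. f (x - s)) k = cnj (fourier_mode T k s) * integral {0..T} (\<lambda>x. g (x - s))"
    by (simp add: fourier_coeff_def)
  also have "integral {0..T} (\<lambda>x. g (x - s)) = integral {0..T} g"
    using assms(1) g by (rule integral_periodic_shift)
  finally show ?thesis unfolding fourier_coeff_def g_def .
qed

lemma fourier_coeff_mode:
  assumes "T > 0"
  shows "fourier_coeff T (fourier_mode T j) k = (if j = k then of_real T else 0)"
proof -
  have coeff: "fourier_coeff T (fourier_mode T j) k = fourier_coeff T (\<lambda>x. 1) (k - j)"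
    by (simp add: fourier_coeff_def cnj_fourier_mode fourier_mode_mult)
  show ?thesis
  proof (cases "j = k")
    case True
    then show ?thesis using assms by (simp add: coeff fourier_coeff_def scaleR_conv_of_real)
  next
    case False
    \<comment> \<open>Shifting by half a period of the mode multiplies the coefficient by \<open>-1\<close>.\<close>
    have "fourier_coeff T (\<lambda>x. 1) (k - j)
        = cnj (fourier_mode T (k - j) (T / (2 * of_int (k - j)))) * fourier_coeff T (\<lambda>x. 1) (k - j)"
      using fourier_coeff_shift[OF assms, of "\<lambda>x. 1"] by simp
    also have "cnj (fourier_mode T (k - j) (T / (2 * of_int (k - j)))) = -1"
    proof -
      have "2 * pi * of_int (k - j) / T * (T / (2 * of_int (k - j))) = pi"
        using assms False by (simp add: field_simps)
      then show ?thesis by (simp add: fourier_mode_def complex_eq_iff)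
    qed
    finally show ?thesis using False by (simp add: coeff)
  qed
qed

lemma fourier_coeff_const:
  assumes "T > 0" "k \<noteq> 0"
  shows "fourier_coeff T (\<lambda>x. c) k = 0"
  using fourier_coeff_mode[of T 0 k] fourier_coeff_cmult[of T c "fourier_mode T 0" k] assms
  by simp

lemma fourier_coeff_trig_sum:
  assumes "T > 0" "finite J"
  shows "fourier_coeff T (\<lambda>x. \<Sum>j\<in>J. c j * fourier_mode T j x) k = (if k \<in> J then of_real T * c k else 0)"
proof -
  have "continuous_on UNIV (\<lambda>x. c j * fourier_mode T j x)" for j
    by (intro continuous_intros)
  then have "fourier_coeff T (\<lambda>x. \<Sum>j\<in>J. c j * fourier_mode T j x) k
      = (\<Sum>j\<in>J. c j * fourier_coeff T (fourier_mode T j) k)"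
    using assms(2) by (simp only: fourier_coeff_sum fourier_coeff_cmult)
  also have "\<dots> = (if k \<in> J then of_real T * c k else 0)"
    using assms by (simp add: fourier_coeff_mode if_distrib mult.commute cong: if_cong)
  finally show ?thesis .
qed

lemma fourier_coeff_of_real_uminus:
  "fourier_coeff T (\<lambda>x. of_real (f x)) (-k) = cnj (fourier_coeff T (\<lambda>x. of_real (f x)) k)"
  by (simp add: fourier_coeff_def integral_cnj cnj_fourier_mode)

section \<open>Uniqueness of Fourier coefficients\<close>

inductive trig_poly :: "real \<Rightarrow> (real \<Rightarrow> complex) \<Rightarrow> bool" for T where
  trig_poly_mode: "trig_poly T (\<lambda>x. c * fourier_mode T k x)"
| trig_poly_add: "trig_poly T p \<Longrightarrow> trig_poly T q \<Longrightarrow> trig_poly T (\<lambda>x. p x + q x)"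

lemma continuous_on_trig_poly: "trig_poly T p \<Longrightarrow> continuous_on A p"
  by (induction rule: trig_poly.induct)
    (simp_all add: continuous_on_add continuous_on_mult_left continuous_on_fourier_mode)

lemma continuous_on_real_trig_poly: "trig_poly T (\<lambda>x. of_real (p x)) \<Longrightarrow> continuous_on A p"
  using continuous_on_Re[OF continuous_on_trig_poly] by fastforce

lemma trig_poly_const: "trig_poly T (\<lambda>x. c)"
  using trig_poly_mode[of T c 0] by simp

lemma trig_poly_mult:
  assumes "trig_poly T p" "trig_poly T q"
  shows "trig_poly T (\<lambda>x. p x * q x)"
  using assms
proof (induction arbitrary: q rule: trig_poly.induct)
  case (trig_poly_mode c k)
  from trig_poly_mode.prems show ?case
  proof (induction rule: trig_poly.induct)
    case (trig_poly_mode d j)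
    have "(\<lambda>x. c * fourier_mode T k x * (d * fourier_mode T j x)) = (\<lambda>x. (c * d) * fourier_mode T (k + j) x)"
      by (simp add: fourier_mode_mult[symmetric] mult_ac)
    then show ?case by (simp only: trig_poly.trig_poly_mode)
  next
    case (trig_poly_add p q)
    then show ?case by (simp add: distrib_left trig_poly.trig_poly_add)
  qed
next
  case (trig_poly_add p1 p2)
  then show ?case by (simp add: distrib_right trig_poly.trig_poly_add)
qed

lemma trig_poly_cos: "trig_poly T (\<lambda>x. of_real (cos (2 * pi / T * x)))"
proof -
  have "(\<lambda>x. of_real (cos (2 * pi / T * x))) = (\<lambda>x. 1/2 * fourier_mode T 1 x + 1/2 * fourier_mode T (-1) x)"
    by (rule ext) (simp add: fourier_mode_def complex_eq_iff)
  then show ?thesis by (simp only: trig_poly.intros)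
qed

lemma trig_poly_sin: "trig_poly T (\<lambda>x. of_real (sin (2 * pi / T * x)))"
proof -
  have "(\<lambda>x. of_real (sin (2 * pi / T * x))) = (\<lambda>x. -\<i>/2 * fourier_mode T 1 x + \<i>/2 * fourier_mode T (-1) x)"
    by (rule ext) (simp add: fourier_mode_def complex_eq_iff)
  then show ?thesis by (simp only: trig_poly.intros)
qed

lemma periodic_factors_through_circle:
  fixes g :: "real \<Rightarrow> real"
  assumes T: "T > 0" and g: "continuous_on UNIV g" "\<forall>x. g (x + T) = g x"
  obtains G where "continuous_on (sphere 0 1) G" "\<And>t. G (cis (2 * pi / T * t)) = g t"
proof
  define q where "q t = cis (2 * pi / T * t)" for t
  define G where "G z = g (Arg z * T / (2 * pi))" for z
  show Gq: "G (q t) = g t" for t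
  proof -
    have "cis (Arg (q t)) = q t"
      using cis_Arg[of "q t"] by (simp add: q_def)
    then have "cis (2 * pi / T * t - Arg (q t)) = 1"
      by (simp add: q_def cis_divide[symmetric])
    then have "cos (2 * pi / T * t - Arg (q t)) = 1"
      by (metis cis.sel(1) one_complex.sel(1))
    then obtain n :: int where "2 * pi / T * t - Arg (q t) = of_int n * 2 * pi"
      using cos_one_2pi_int by blast
    then have "Arg (q t) * T / (2 * pi) = t + of_int (-n) * T"
      using T by (simp add: field_simps)
    then show ?thesis using periodic_add_of_int[OF g(2), of t "-n"] by (simp add: G_def)
  qed
  have "quotient_map (top_of_set {-T/2..T/2}) (top_of_set (sphere 0 1)) q"
  proof (rule continuous_imp_quotient_map)
    show "continuous_map (top_of_set {-T/2..T/2}) (top_of_set (sphere 0 1)) q"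
      unfolding continuous_map_subtopology_eu q_def by (intro conjI continuous_intros) auto
    have "z \<in> q ` {-T/2..T/2}" if "cmod z = 1" for z
    proof (rule rev_image_eqI)
      show "Arg z * T / (2 * pi) \<in> {-T/2..T/2}"
        using Arg_bounded[of z] T mult_left_mono[of "-pi" "Arg z" T] mult_left_mono[of "Arg z" pi T]
        by (auto simp: field_simps)
      show "z = q (Arg z * T / (2 * pi))"
        using that cis_Arg[of z] T by (force simp: q_def sgn_div_norm)
    qed
    then show "q ` topspace (top_of_set {-T/2..T/2}) = topspace (top_of_set (sphere 0 1))"
      by (auto simp: q_def)
  qed (auto intro: Hausdorff_space_subtopology compact_space_subtopology)
  moreover have "continuous_map (top_of_set {-T/2..T/2}) euclidean (G \<circ> q)"
    using Gq continuous_on_subset[OF g(1)] by (simp add: o_def)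
  ultimately have "continuous_map (top_of_set (sphere 0 1)) euclidean G"
    by (rule continuous_compose_quotient_map)
  then show "continuous_on (sphere 0 1) G" by simp
qed

lemma trig_poly_uniform_approx:
  fixes g :: "real \<Rightarrow> real"
  assumes T: "T > 0" and g: "continuous_on UNIV g" "\<forall>x. g (x + T) = g x" and e: "e > 0"
  obtains p where "trig_poly T (\<lambda>x. of_real (p x))" "\<And>x. \<bar>g x - p x\<bar> < e"
proof -
  define S where "S = sphere (0::complex) 1"
  define q where "q t = cis (2 * pi / T * t)" for t
  obtain G where G: "continuous_on S G" "\<And>t. G (q t) = g t"
    using periodic_factors_through_circle[OF T g] unfolding S_def q_def by blast
  \<comment> \<open>Continuous functions on the circle that are real trigonometric polynomials along \<open>q\<close>
    form a point-separating algebra, so Stone--Weierstrass applies to them.\<close>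
  define P where "P F \<longleftrightarrow> continuous_on S F \<and>
    (\<exists>p. trig_poly T (\<lambda>x. of_real (p x)) \<and> (\<forall>t. F (q t) = p t))" for F
  have "\<exists>F. P F \<and> (\<forall>z\<in>S. \<bar>G z - F z\<bar> < e)"
  proof (rule Stone_Weierstrass_HOL[of S P G e])
    show "P (\<lambda>z. c)" for c
      unfolding P_def by (auto intro!: exI[of _ "\<lambda>x. c"] trig_poly_const)
    show "P (\<lambda>z. F1 z + F2 z)" "P (\<lambda>z. F1 z * F2 z)" if PF: "P F1 \<and> P F2" for F1 F2
    proof -
      obtain p1 p2 where F: "continuous_on S F1" "continuous_on S F2" "\<forall>t. F1 (q t) = p1 t" "\<forall>t. F2 (q t) = p2 t"
        and p: "trig_poly T (\<lambda>x. of_real (p1 x))" "trig_poly T (\<lambda>x. of_real (p2 x))"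
        using PF unfolding P_def by blast
      have "trig_poly T (\<lambda>x. of_real (p1 x + p2 x))" "trig_poly T (\<lambda>x. of_real (p1 x * p2 x))"
        using trig_poly_add[OF p] trig_poly_mult[OF p] by simp_all
      then show "P (\<lambda>z. F1 z + F2 z)" "P (\<lambda>z. F1 z * F2 z)"
        unfolding P_def using F
        by (intro conjI continuous_on_add continuous_on_mult exI[of _ "\<lambda>x. p1 x + p2 x"]
            exI[of _ "\<lambda>x. p1 x * p2 x"]; simp)+
    qed
    have "P Re"
      unfolding P_def q_def using trig_poly_cos
      by (auto intro!: continuous_on_Re exI[of _ "\<lambda>t. cos (2 * pi / T * t)"])
    have "P Im"
      unfolding P_def q_def using trig_poly_sin
      by (auto intro!: continuous_on_Im exI[of _ "\<lambda>t. sin (2 * pi / T * t)"])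
    show "\<exists>F. P F \<and> F z \<noteq> F w" if "z \<in> S \<and> w \<in> S \<and> z \<noteq> w" for z w
      using that \<open>P Re\<close> \<open>P Im\<close> complex_eqI by metis
  qed (use G e in \<open>auto simp: P_def S_def\<close>)
  then obtain F p where "\<forall>z\<in>S. \<bar>G z - F z\<bar> < e" "trig_poly T (\<lambda>x. of_real (p x))" "\<forall>t. F (q t) = p t"
    unfolding P_def by blast
  moreover have "q t \<in> S" for t by (simp add: q_def S_def)
  ultimately show ?thesis using that G(2) by metis
qed

lemma integral_mult_trig_poly_eq_0:
  fixes g :: "real \<Rightarrow> complex"
  assumes g: "continuous_on UNIV g" and coeff: "\<And>k. fourier_coeff T g k = 0"
  shows "trig_poly T p \<Longrightarrow> integral {0..T} (\<lambda>x. g x * p x) = 0"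
proof (induction rule: trig_poly.induct)
  case (trig_poly_mode c k)
  have "integral {0..T} (\<lambda>x. g x * (c * fourier_mode T k x)) = c * fourier_coeff T g (-k)"
    by (simp add: fourier_coeff_def cnj_fourier_mode mult.left_commute)
  then show ?case using coeff by simp
next
  case (trig_poly_add p q)
  have "(\<lambda>x. g x * r x) integrable_on {0..T}" if "trig_poly T r" for r
    using continuous_on_mult[OF g continuous_on_trig_poly[OF that]]
    by (auto intro: integrable_continuous_interval continuous_on_subset)
  then show ?case using trig_poly_add by (simp add: distrib_left integral_add)
qed

lemma integral_mult_real_trig_poly_eq_0:
  fixes g p :: "real \<Rightarrow> real"
  assumes g: "continuous_on UNIV g" and coeff: "\<And>k. fourier_coeff T (\<lambda>x. of_real (g x)) k = 0"
    and p: "trig_poly T (\<lambda>x. of_real (p x))"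
  shows "integral {0..T} (\<lambda>x. g x * p x) = 0"
proof -
  have "(\<lambda>x. g x * p x) integrable_on {0..T}"
    using g continuous_on_real_trig_poly[OF p]
    by (auto intro: integrable_continuous_interval continuous_on_subset continuous_on_mult)
  then have "integral {0..T} (\<lambda>x. of_real (g x * p x)) = complex_of_real (integral {0..T} (\<lambda>x. g x * p x))"
    by (intro integral_unique has_integral_of_real integrable_integral)
  then have "complex_of_real (integral {0..T} (\<lambda>x. g x * p x)) = integral {0..T} (\<lambda>x. of_real (g x) * of_real (p x))"
    by simp
  also have "\<dots> = 0"
    using g coeff p by (intro integral_mult_trig_poly_eq_0 continuous_on_of_real)
  finally show ?thesis by simp
qed

lemma integral_square_le_of_fourier_coeff_eq_0:
  fixes g :: "real \<Rightarrow> real"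
  assumes T: "T > 0" and g: "continuous_on UNIV g" "\<forall>x. g (x + T) = g x"
    and coeff: "\<And>k. fourier_coeff T (\<lambda>x. of_real (g x)) k = 0" and e: "e > 0"
  shows "integral {0..T} (\<lambda>x. (g x)\<^sup>2) \<le> e * integral {0..T} (\<lambda>x. \<bar>g x\<bar>)"
proof -
  have int: "f integrable_on {0..T}" if "continuous_on UNIV f" for f :: "real \<Rightarrow> real"
    using that by (auto intro: integrable_continuous_interval continuous_on_subset)
  obtain p where p: "trig_poly T (\<lambda>x. of_real (p x))" "\<And>x. \<bar>g x - p x\<bar> < e"
    using trig_poly_uniform_approx[OF T g e] by blast
  note pc = continuous_on_real_trig_poly[OF p(1)]
  have "integral {0..T} (\<lambda>x. (g x)\<^sup>2) = integral {0..T} (\<lambda>x. g x * (g x - p x) + g x * p x)"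
    by (simp add: power2_eq_square algebra_simps)
  also have "\<dots> = integral {0..T} (\<lambda>x. g x * (g x - p x))"
    using integral_mult_real_trig_poly_eq_0[OF g(1) coeff p(1)] g(1) pc
    by (simp add: integral_add int continuous_on_mult continuous_on_diff)
  also have "\<dots> \<le> integral {0..T} (\<lambda>x. e * \<bar>g x\<bar>)"
  proof (rule integral_le)
    show "g x * (g x - p x) \<le> e * \<bar>g x\<bar>" for x
      using mult_left_mono[OF less_imp_le[OF p(2)[of x]] abs_ge_zero[of "g x"]]
      by (metis abs_ge_self abs_mult dual_order.trans mult.commute)
  qed (use g(1) pc in \<open>auto intro!: int continuous_on_mult continuous_on_diff continuous_on_rabs continuous_on_const\<close>)
  finally show ?thesis by simp
qed

lemma fourier_coeff_eq_0_imp_eq_0: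
  fixes g :: "real \<Rightarrow> real"
  assumes T: "T > 0" and g: "continuous_on UNIV g" "\<forall>x. g (x + T) = g x"
    and coeff: "\<And>k. fourier_coeff T (\<lambda>x. of_real (g x)) k = 0"
  shows "g x = 0"
proof -
  have int: "f integrable_on {0..T}" if "continuous_on UNIV f" for f :: "real \<Rightarrow> real"
    using that by (auto intro: integrable_continuous_interval continuous_on_subset)
  define A where "A = integral {0..T} (\<lambda>x. \<bar>g x\<bar>)"
  have "A \<ge> 0"
    unfolding A_def using g(1) by (intro integral_nonneg int continuous_on_rabs) auto
  have "integral {0..T} (\<lambda>x. (g x)\<^sup>2) \<le> 0"
  proof (rule field_le_epsilon)
    fix e :: real assume "e > 0"
    then have "integral {0..T} (\<lambda>x. (g x)\<^sup>2) \<le> e / (A + 1) * A"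
      unfolding A_def using \<open>A \<ge> 0\<close>
      by (intro integral_square_le_of_fourier_coeff_eq_0[OF T g coeff]) (simp add: A_def)
    also have "\<dots> \<le> e" using \<open>A \<ge> 0\<close> \<open>e > 0\<close> by (simp add: field_simps)
    finally show "integral {0..T} (\<lambda>x. (g x)\<^sup>2) \<le> 0 + e" by simp
  qed
  moreover have "integral {0..T} (\<lambda>x. (g x)\<^sup>2) \<ge> 0"
    using g(1) by (intro integral_nonneg int continuous_on_power) auto
  ultimately have "integral {0..T} (\<lambda>x. (g x)\<^sup>2) = 0" by simp
  then have "\<forall>y\<in>{0..T}. (g y)\<^sup>2 = 0"
    using T g(1) by (subst (asm) integral_eq_0_iff) (auto intro: continuous_on_power continuous_on_subset)
  then show ?thesis
    using periodic_eqI[OF T g(2), of "\<lambda>_. 0" 0] by auto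
qed

section \<open>Periodic functions with a single frequency\<close>

lemma cosine_eq_fourier_modes:
  "complex_of_real (2 * cmod c * cos (2 * pi * of_int k / T * x + Arg c))
    = c * fourier_mode T k x + cnj c * fourier_mode T (-k) x"
proof -
  define z where "z = c * fourier_mode T k x"
  have "z = rcis (cmod c) (Arg c) * cis (2 * pi * of_int k / T * x)"
    by (simp add: z_def rcis_cmod_Arg fourier_mode_def)
  then have "Re z = cmod c * cos (2 * pi * of_int k / T * x + Arg c)"
    by (simp add: cis_rcis_eq rcis_mult add.commute)
  have "c * fourier_mode T k x + cnj c * fourier_mode T (-k) x = z + cnj z"
    by (simp add: z_def cnj_fourier_mode)
  also have "\<dots> = of_real (2 * Re z)"
    by (rule complex_add_cnj)
  finally show ?thesis
    using \<open>Re z = _\<close> by (simp add: mult.assoc)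
qed

lemma single_frequency_imp_cosine:
  fixes h :: "real \<Rightarrow> real"
  assumes T: "T > 0" and h: "continuous_on UNIV h" "\<forall>x. h (x + T) = h x" and k0: "k0 > 0"
    and supp: "\<And>k. k \<notin> {0, k0, -k0} \<Longrightarrow> fourier_coeff T (\<lambda>x. of_real (h x)) k = 0"
  obtains \<alpha> \<beta> \<phi> where "\<beta> \<ge> 0" "\<And>x. h x = \<alpha> + \<beta> * cos (2 * pi * of_int k0 / T * x + \<phi>)"
proof -
  define C where "C = fourier_coeff T (\<lambda>x. of_real (h x))"
  define J where "J = {0, k0, -k0}"
  define r where "r x = Re (C 0) / T + 2 * cmod (C k0) / T * cos (2 * pi * of_int k0 / T * x + Arg (C k0))"
    for x
  have "C 0 = cnj (C 0)"
    using fourier_coeff_of_real_uminus[of T h 0] by (simp add: C_def)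
  then have C0: "C 0 = of_real (Re (C 0))"
    by (simp add: complex_eq_iff)
  have r_modes: "complex_of_real (r x) = (\<Sum>j\<in>J. C j / T * fourier_mode T j x)" for x
  proof -
    have "complex_of_real (r x) = (C 0 + (C k0 * fourier_mode T k0 x + cnj (C k0) * fourier_mode T (-k0) x)) / T"
      using C0 by (simp add: r_def cosine_eq_fourier_modes[symmetric] add_divide_distrib)
    also have "\<dots> = (\<Sum>j\<in>J. C j / T * fourier_mode T j x)"
      using k0 fourier_coeff_of_real_uminus[of T h k0]
      by (simp add: J_def C_def add_divide_distrib)
    finally show ?thesis .
  qed
  have rc: "continuous_on UNIV r"
    unfolding r_def by (intro continuous_intros)
  have "complex_of_real (r (x + T)) = complex_of_real (r x)" for x
    unfolding r_modes using T by (simp add: fourier_mode_periodic)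
  then have rp: "\<forall>x. r (x + T) = r x" by simp
  have "finite J" by (simp add: J_def)
  have "fourier_coeff T (\<lambda>x. of_real (h x - r x)) k = 0" for k
  proof -
    have "fourier_coeff T (\<lambda>x. of_real (h x - r x)) k
        = C k - fourier_coeff T (\<lambda>x. \<Sum>j\<in>J. C j / T * fourier_mode T j x) k"
      unfolding of_real_diff r_modes C_def
      using h(1) by (intro fourier_coeff_diff continuous_on_of_real continuous_intros)
    also have "\<dots> = C k - (if k \<in> J then C k else 0)"
      using fourier_coeff_trig_sum[OF T \<open>finite J\<close>, of "\<lambda>j. C j / T" k] T by simp
    finally show ?thesis using supp by (auto simp: C_def J_def)
  qed
  then have "h x - r x = 0" for x
    using T h rc rp by (intro fourier_coeff_eq_0_imp_eq_0) (auto intro: continuous_on_diff)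
  then show ?thesis
    using that[of "2 * cmod (C k0) / T" "Re (C 0) / T" "Arg (C k0)"] T by (simp add: r_def)
qed

lemma unique_max_imp_period_le:
  fixes h :: "real \<Rightarrow> real"
  assumes T: "T > 0" "\<forall>x. h (x + T) = h x" and max: "\<exists>!x. x \<in> {a..<a+T} \<and> (\<forall>y. h y \<le> h x)"
    and p: "p > 0" "\<forall>x. h (x + p) = h x"
  shows "T \<le> p"
proof -
  obtain m where m: "m \<in> {a..<a+T}" "\<forall>y. h y \<le> h m"
    using max by blast
  obtain y n where y: "y \<in> {a..<a+T}" "m + p = y + of_int n * T"
    using period_representative[OF T(1)] by blast
  have "h y = h m"
    using periodic_add_of_int[OF T(2), of y n] y(2) p(2) by metis
  then have "y = m" using max m y(1) by metis
  then have "p = of_int n * T" using y(2) by simp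
  then have "n \<ge> 1" using p(1) T(1) by (simp add: zero_less_mult_iff)
  then show "T \<le> p" using \<open>p = of_int n * T\<close> T(1) by simp
qed

lemma cosine_unique_max_imp_fundamental:
  fixes h :: "real \<Rightarrow> real"
  assumes T: "T > 0" "\<forall>x. h (x + T) = h x" and max: "\<exists>!x. x \<in> {a..<a+T} \<and> (\<forall>y. h y \<le> h x)"
    and k: "k > 0" and h: "\<And>x. h x = \<alpha> + \<beta> * cos (2 * pi * of_int k / T * x + \<phi>)"
  shows "\<beta> \<noteq> 0" "k = 1"
proof -
  show "\<beta> \<noteq> 0"
  proof
    assume "\<beta> = 0"
    then have "\<forall>x. h (x + T / 2) = h x" using h by simp
    then have "T \<le> T / 2" using unique_max_imp_period_le[OF T max, of "T / 2"] T(1) by simp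
    then show False using T(1) by simp
  qed
  have "2 * pi * of_int k / T * (x + T / of_int k) + \<phi> = (2 * pi * of_int k / T * x + \<phi>) + 2 * pi" for x
    using T(1) k by (simp add: field_simps)
  then have "\<forall>x. h (x + T / of_int k) = h x" by (simp only: h cos_periodic) simp
  then have "T \<le> T / of_int k" using unique_max_imp_period_le[OF T max] T(1) k by simp
  then show "k = 1" using T(1) k by (simp add: field_simps)
qed

section \<open>Generalized von Mises families\<close>

lemma gvM_family_subset_affine:
  assumes \<beta>: "\<beta> \<ge> 0" and h: "\<And>x. h x = \<alpha> + \<beta> * g (x - c)"
  shows "gvM_family h lmin lmax \<subseteq> gvM_family g lmin lmax"
proof
  fix f assume "f \<in> gvM_family h lmin lmax"
  then obtain a b s where f: "f = (\<lambda>x. if x \<in> {lmin..lmax} then exp (b + a * h (x - s)) else 0)"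
    and a: "a \<ge> 0"
    unfolding gvM_family_def by blast
  have "b + a * h (x - s) = (b + a * \<alpha>) + (a * \<beta>) * g (x - (s + c))" for x
    by (simp add: h algebra_simps)
  then have "f = (\<lambda>x. if x \<in> {lmin..lmax} then exp ((b + a * \<alpha>) + (a * \<beta>) * g (x - (s + c))) else 0)"
    unfolding f by presburger
  moreover have "a * \<beta> \<ge> 0" using a \<beta> by simp
  ultimately show "f \<in> gvM_family g lmin lmax" unfolding gvM_family_def by blast
qed

lemma gvM_family_eqI_affine:
  assumes \<beta>: "\<beta> > 0" and h: "\<And>x. h x = \<alpha> + \<beta> * g (x - c)"
  shows "gvM_family h lmin lmax = gvM_family g lmin lmax"
proof
  show "gvM_family h lmin lmax \<subseteq> gvM_family g lmin lmax"
    using \<beta> h by (intro gvM_family_subset_affine) auto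
  have g: "g x = - \<alpha> / \<beta> + 1 / \<beta> * h (x - (- c))" for x
    using \<beta> by (simp add: h field_simps)
  show "gvM_family g lmin lmax \<subseteq> gvM_family h lmin lmax"
    by (rule gvM_family_subset_affine[of "1 / \<beta>" g "- \<alpha> / \<beta>" h "- c"]) (use \<beta> g in auto)
qed

lemma gvM_family_mult_closed_imp_shift_identity:
  assumes "lmin < lmax" "\<forall>x. h (x + (lmax - lmin)) = h x" "mult_closed (gvM_family h lmin lmax)"
  shows "\<exists>a b t. \<forall>x. h x + h (x - s) = b + a * h (x - t)"
proof -
  define F where "F u = (\<lambda>x. if x \<in> {lmin..lmax} then exp (h (x - u)) else 0)" for u
  have "F u \<in> gvM_family h lmin lmax" for u
    unfolding gvM_family_def F_def
    by (rule CollectI, rule exI[of _ "1::real"], rule exI[of _ "0::real"], rule exI[of _ u])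
      (simp cong: if_cong)
  then have "(\<lambda>x. F 0 x * F s x) \<in> gvM_family h lmin lmax"
    using assms(3) unfolding mult_closed_def by blast
  then obtain a b t where abt: "(\<lambda>x. F 0 x * F s x) = (\<lambda>x. if x \<in> {lmin..lmax} then exp (b + a * h (x - t)) else 0)"
    unfolding gvM_family_def by blast
  have "h x + h (x - s) = b + a * h (x - t)" for x
  proof (rule periodic_eqI[where f = "\<lambda>x. h x + h (x - s)" and g = "\<lambda>x. b + a * h (x - t)"])
    show "lmax - lmin > 0" using assms(1) by simp
    show "\<forall>x. h (x + (lmax - lmin)) + h (x + (lmax - lmin) - s) = h x + h (x - s)"
      "\<forall>x. b + a * h (x + (lmax - lmin) - t) = b + a * h (x - t)"
      using assms(2) by (metis diff_add_eq)+
    show "h y + h (y - s) = b + a * h (y - t)" if "y \<in> {lmin..<lmin + (lmax - lmin)}" for y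
      using fun_cong[OF abt, of y] that by (simp add: F_def exp_add[symmetric])
  qed
  then show ?thesis by blast
qed

lemma shift_identity_imp_norm_eq:
  fixes h :: "real \<Rightarrow> real"
  assumes T: "T > 0" and h: "continuous_on UNIV h" "\<forall>x. h (x + T) = h x"
    and shift: "\<forall>x. h x + h (x - s) = b + a * h (x - t)"
    and k: "k \<noteq> 0" "fourier_coeff T (\<lambda>x. of_real (h x)) k \<noteq> 0"
  shows "cmod (1 + fourier_mode T k s) = \<bar>a\<bar>"
proof -
  define H where "H = (\<lambda>x. complex_of_real (h x))"
  define C where "C = fourier_coeff T H k"
  have Hc: "continuous_on UNIV H" and Hp: "\<forall>x. H (x + T) = H x"
    using h unfolding H_def by (auto intro: continuous_on_of_real)
  have Hs: "continuous_on UNIV (\<lambda>x. H (x - u))" for u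
    by (rule continuous_on_compose2[OF Hc]) (auto intro: continuous_on_diff)
  have coeff_H_shift: "fourier_coeff T (\<lambda>x. H (x - u)) k = cnj (fourier_mode T k u) * C" for u
    unfolding C_def using fourier_coeff_shift[OF T Hc Hp] by simp
  have "(\<lambda>x. H x + H (x - s)) = (\<lambda>x. of_real b + of_real a * H (x - t))"
    using shift unfolding H_def by (metis of_real_add of_real_mult)
  then have "fourier_coeff T (\<lambda>x. H x + H (x - s)) k = fourier_coeff T (\<lambda>x. of_real b + of_real a * H (x - t)) k"
    by simp
  then have "C * (1 + cnj (fourier_mode T k s)) = C * (of_real a * cnj (fourier_mode T k t))"
    using Hc Hs coeff_H_shift[of 0] coeff_H_shift[of s] coeff_H_shift[of t]
      fourier_coeff_const[OF T k(1)]
    by (simp add: fourier_coeff_add fourier_coeff_cmult continuous_on_mult_left algebra_simps)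
  then have "cnj (1 + fourier_mode T k s) = of_real a * cnj (fourier_mode T k t)"
    using k(2) by (simp add: C_def H_def)
  then show ?thesis
    by (metis complex_mod_cnj norm_fourier_mode norm_mult norm_of_real mult.right_neutral)
qed

lemma cos_eq_1_if_cmod_one_plus_cis_eq_2:
  assumes "cmod (1 + cis \<theta>) = 2"
  shows "cos \<theta> = 1"
proof -
  have "(cmod (1 + cis \<theta>))\<^sup>2 = (1 + cos \<theta>)\<^sup>2 + (sin \<theta>)\<^sup>2"
    by (simp add: cmod_power2)
  also have "\<dots> = 2 + 2 * cos \<theta>"
    using sin_cos_squared_add[of \<theta>] by (simp add: power2_eq_square algebra_simps)
  finally show ?thesis using assms by simp
qed

lemma shift_identities_imp_single_frequency:
  fixes h :: "real \<Rightarrow> real"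
  assumes T: "T > 0" and h: "continuous_on UNIV h" "\<forall>x. h (x + T) = h x"
    and shift: "\<And>s. \<exists>a b t. \<forall>x. h x + h (x - s) = b + a * h (x - t)"
    and jk: "0 < j" "j < k"
    and C: "fourier_coeff T (\<lambda>x. of_real (h x)) j \<noteq> 0" "fourier_coeff T (\<lambda>x. of_real (h x)) k \<noteq> 0"
  shows False
proof -
  define s where "s = T / of_int k"
  obtain a b t where abt: "\<forall>x. h x + h (x - s) = b + a * h (x - t)"
    using shift by blast
  \<comment> \<open>\<open>s\<close> is a period of the mode \<open>k\<close>, which forces \<open>\<bar>a\<bar> = 2\<close>;
    then \<open>s\<close> must be a period of the mode \<open>j\<close> too.\<close>
  have "2 * pi * of_int k / T * s = 2 * pi"
    using T jk by (simp add: s_def)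
  then have "fourier_mode T k s = 1"
    by (simp add: fourier_mode_def)
  then have "\<bar>a\<bar> = 2"
    using shift_identity_imp_norm_eq[OF T h abt _ C(2)] jk by simp
  then have "cmod (1 + cis (2 * pi * of_int j / T * s)) = 2"
    using shift_identity_imp_norm_eq[OF T h abt _ C(1)] jk by (simp add: fourier_mode_def)
  then have "cos (2 * pi * of_int j / T * s) = 1"
    by (rule cos_eq_1_if_cmod_one_plus_cis_eq_2)
  then obtain n :: int where "2 * pi * of_int j / T * s = of_int n * 2 * pi"
    using cos_one_2pi_int by blast
  then have "real_of_int j = of_int (n * k)"
    using T jk by (simp add: s_def field_simps)
  then have "j = n * k" by (simp only: of_int_eq_iff)
  then have "n > 0" using jk by (smt (verit) zero_less_mult_iff)
  then have "k \<le> j" using \<open>j = n * k\<close> jk by (simp add: mult_le_cancel_right1)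
  then show False using jk by simp
qed

lemma shift_identities_imp_fourier_support:
  fixes h :: "real \<Rightarrow> real"
  assumes T: "T > 0" and h: "continuous_on UNIV h" "\<forall>x. h (x + T) = h x"
    and shift: "\<And>s. \<exists>a b t. \<forall>x. h x + h (x - s) = b + a * h (x - t)"
  obtains k0 where "k0 > 0" "\<And>k. k \<notin> {0, k0, -k0} \<Longrightarrow> fourier_coeff T (\<lambda>x. of_real (h x)) k = 0"
proof -
  define C where "C = fourier_coeff T (\<lambda>x. of_real (h x))"
  obtain k0 where k0: "k0 > 0" "\<And>k. k > 0 \<Longrightarrow> C k \<noteq> 0 \<Longrightarrow> k = k0"
  proof (cases "\<exists>k>0. C k \<noteq> 0")
    case True
    then obtain k0 where "k0 > 0" "C k0 \<noteq> 0" by blast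
    then show ?thesis
      using that shift_identities_imp_single_frequency[OF T h shift] unfolding C_def
      by (metis linorder_neq_iff)
  next
    case False
    then show ?thesis using that[of 1] by auto
  qed
  have "C k = 0" if "k \<notin> {0, k0, -k0}" for k
  proof (cases "k > 0")
    case True
    then show ?thesis using k0(2) that by auto
  next
    case False
    then have "C (-k) = 0" using k0(2)[of "-k"] that by force
    then show ?thesis using fourier_coeff_of_real_uminus[of T h "-k"] by (simp add: C_def)
  qed
  then show ?thesis using that k0(1) by (simp add: C_def)
qed

theorem proposition3:
  fixes h :: "real \<Rightarrow> real" and lmin lmax :: real
  assumes "lmin < lmax"
    and "continuous_on UNIV h"
    and "\<forall>x. h (x + (lmax - lmin)) = h x"
    and "\<exists>!x. x \<in> {lmin..<lmax} \<and> (\<forall>y. h y \<le> h x)"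
    and "mult_closed (gvM_family h lmin lmax)"
  shows "gvM_family h lmin lmax =
         gvM_family (\<lambda>x. cos (2 * pi * x / (lmax - lmin))) lmin lmax"
proof -
  define T where "T = lmax - lmin"
  have T: "T > 0" and hp: "\<forall>x. h (x + T) = h x"
    using assms(1,3) by (simp_all add: T_def)
  have max: "\<exists>!x. x \<in> {lmin..<lmin + T} \<and> (\<forall>y. h y \<le> h x)"
    using assms(4) by (simp add: T_def)
  have shift: "\<exists>a b t. \<forall>x. h x + h (x - s) = b + a * h (x - t)" for s
    using gvM_family_mult_closed_imp_shift_identity[OF assms(1,3,5)] .
  obtain k0 where k0: "k0 > 0" "\<And>k. k \<notin> {0, k0, -k0} \<Longrightarrow> fourier_coeff T (\<lambda>x. of_real (h x)) k = 0"
    using shift_identities_imp_fourier_support[OF T assms(2) hp shift] by metis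
  obtain \<alpha> \<beta> \<phi> where "\<beta> \<ge> 0" and h: "\<And>x. h x = \<alpha> + \<beta> * cos (2 * pi * of_int k0 / T * x + \<phi>)"
    using single_frequency_imp_cosine[OF T assms(2) hp k0] by metis
  have "\<beta> > 0" "k0 = 1"
    using cosine_unique_max_imp_fundamental[OF T hp max k0(1) h] \<open>\<beta> \<ge> 0\<close> by auto
  have "2 * pi * (x - (- \<phi> * T / (2 * pi))) / (lmax - lmin) = 2 * pi * of_int k0 / T * x + \<phi>" for x
    using T \<open>k0 = 1\<close> unfolding T_def[symmetric] by (simp add: field_simps)
  then have "h x = \<alpha> + \<beta> * cos (2 * pi * (x - (- \<phi> * T / (2 * pi))) / (lmax - lmin))" for x
    by (simp only: h)
  then show ?thesis
    by (rule gvM_family_eqI_affine[OF \<open>\<beta> > 0\<close>])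
qed

end
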